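(* Let $a\in\mathbb{R}^n$, $\mathcal{B}\subseteq\mathbb{R}^n$, and $\mathcal{M}=\{\mathrm{Sym}(ab^\top): b\in\mathcal{B}\}$. Then for every positive semidefinite $X\in\mathbb{S}^n_+$ of rank at least two, $\mathrm{range}(X)\cap\mathcal{N}(\mathcal{M})\neq\{0\}$. In particular, $\mathcal{S}(\mathcal{M})$ is rank-one generated.
   Context: $\mathbb{S}^n$ is the space of real symmetric $n\times n$ matrices with $\langle A,B\rangle=\mathrm{tr}(AB)$; $\mathbb{S}^n_+$ is the PSD cone; $\mathrm{Sym}(M)=(M+M^\top)/2$. For $\mathcal{M}\subseteq\mathbb{S}^n$: $\mathcal{S}(\mathcal{M})=\{X\in\mathbb{S}^n_+:\langle M,X\rangle\ge0\ \forall M\in\mathcal{M}\}$ and $\mathcal{N}(\mathcal{M})=\{x\in\mathbb{R}^n: x^\top Mx=0\ \forall M\in\mathcal{M}\}$. A closed convex cone $\mathcal{S}\subseteq\mathbb{S}^n_+$ is rank-one generated (ROG) if $\mathcal{S}=\mathrm{conv}(\mathcal{S}\cap\{xx^\top:x\in\mathbb{R}^n\})$. *)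

theory Defs
  imports "HOL-Analysis.Analysis"
begin

definition sym_mat :: "real^'n^'n \<Rightarrow> bool" where
  "sym_mat X \<longleftrightarrow> transpose X = X"

definition mat_inner :: "real^'n^'n \<Rightarrow> real^'n^'n \<Rightarrow> real" where
  "mat_inner A B = (\<Sum>i\<in>UNIV. (A ** B) $ i $ i)"

definition psd_cone :: "(real^'n^'n) set" where
  "psd_cone = {X. sym_mat X \<and> (\<forall>x. x \<bullet> (X *v x) \<ge> 0)}"

definition outer :: "real^'n \<Rightarrow> real^'n \<Rightarrow> real^'n^'n" where
  "outer a b = (\<chi> i j. a $ i * b $ j)"

definition Sym :: "real^'n^'n \<Rightarrow> real^'n^'n" where
  "Sym M = (1/2) *\<^sub>R (M + transpose M)"

definition S_of :: "(real^'n^'n) set \<Rightarrow> (real^'n^'n) set" where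
  "S_of \<M> = {X \<in> psd_cone. \<forall>M\<in>\<M>. mat_inner M X \<ge> 0}"

definition N_of :: "(real^'n^'n) set \<Rightarrow> (real^'n) set" where
  "N_of \<M> = {x. \<forall>M\<in>\<M>. x \<bullet> (M *v x) = 0}"

definition ROG :: "(real^'n^'n) set \<Rightarrow> bool" where
  "ROG S \<longleftrightarrow> closed S \<and> convex_cone S \<and> S \<subseteq> psd_cone \<and>
     S = convex hull (S \<inter> range (\<lambda>x. outer x x))"

end

theory Submission
  imports Defs
begin

text \<open>Since \<open>x\<^sup>T Sym(a b\<^sup>T) x = (a\<^sup>T x)(b\<^sup>T x)\<close>, the hyperplane \<open>a\<^sup>\<bottom>\<close> lies in \<open>\<N>(\<M>)\<close>, and
  every subspace of dimension at least two meets a hyperplane nontrivially. For rank one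
  generation, take \<open>X \<in> \<S>(\<M>)\<close> of rank at least two and \<open>x = X y \<noteq> 0\<close> in \<open>\<N>(\<M>)\<close>.
  The deflation \<open>X - x x\<^sup>T / (y\<^sup>T X y)\<close> stays positive semidefinite by Cauchy-Schwarz,
  has the same inner products with \<open>\<M>\<close> because \<open>x \<in> \<N>(\<M>)\<close>, and has smaller rank; so
  induction on the rank writes \<open>X\<close> as a sum of rank one matrices of \<open>\<S>(\<M>)\<close>.\<close>

lemma outer_mulv: "outer a b *v x = (b \<bullet> x) *\<^sub>R a"
  by (simp add: vec_eq_iff matrix_vector_mult_def outer_def inner_vec_def sum_distrib_left mult_ac)

lemma transpose_outer: "transpose (outer a b) = outer b a"
  by (simp add: vec_eq_iff transpose_def outer_def)

lemma scaleR_outer_self: "0 \<le> c \<Longrightarrow> c *\<^sub>R outer x x = outer (sqrt c *\<^sub>R x) (sqrt c *\<^sub>R x)"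
  by (simp add: outer_def vec_eq_iff mult_ac)

lemma outer_zero: "outer 0 0 = 0"
  by (simp add: outer_def vec_eq_iff)

lemma quadratic_form_Sym_outer: "x \<bullet> (Sym (outer a b) *v x) = (a \<bullet> x) * (b \<bullet> x)"
  by (simp add: Sym_def transpose_outer scaleR_matrix_vector_assoc[symmetric]
      matrix_vector_mult_add_rdistrib outer_mulv inner_add_right inner_commute)

lemma linear_mat_inner: "linear (mat_inner M)"
  by (rule linearI)
    (simp_all add: mat_inner_def matrix_matrix_mult_def algebra_simps sum.distrib sum_distrib_left)

lemma mat_inner_outer_self: "mat_inner M (outer x x) = x \<bullet> (M *v x)"
  by (simp add: mat_inner_def matrix_matrix_mult_def outer_def inner_vec_def matrix_vector_mult_def
      sum_distrib_left mult_ac)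

lemma linear_quadratic_form: "linear (\<lambda>X. x \<bullet> (X *v (x::real^'n)))"
proof (rule linearI)
  show "x \<bullet> ((c *\<^sub>R X) *v x) = c *\<^sub>R (x \<bullet> (X *v x))" for c X
    by (subst scaleR_matrix_vector_assoc[symmetric]) simp
qed (simp add: matrix_vector_mult_add_rdistrib inner_add_right)

lemma transpose_add: "transpose (A + B) = transpose A + transpose B"
  by (simp add: transpose_def vec_eq_iff)

lemma transpose_diff: "transpose (A - B) = transpose A - transpose B"
  by (simp add: transpose_def vec_eq_iff)

lemma sym_mat_inner_mulv: "sym_mat X \<Longrightarrow> (X *v u) \<bullet> v = u \<bullet> (X *v v)"
  unfolding sym_mat_def by (metis dot_lmul_matrix inner_commute transpose_matrix_vector)

lemma psd_coneD:
  assumes "X \<in> psd_cone"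
  shows "sym_mat X" "0 \<le> x \<bullet> (X *v x)"
  using assms by (auto simp: psd_cone_def)

lemma outer_self_in_psd_cone: "outer x x \<in> psd_cone"
  by (simp add: psd_cone_def sym_mat_def transpose_outer outer_mulv inner_commute)

lemma quadratic_form_add_scaleR:
  assumes "sym_mat X"
  shows "(u + t *\<^sub>R v) \<bullet> (X *v (u + t *\<^sub>R v))
    = u \<bullet> (X *v u) + 2 * (u \<bullet> (X *v v)) * t + v \<bullet> (X *v v) * t\<^sup>2"
proof -
  have "v \<bullet> (X *v u) = u \<bullet> (X *v v)"
    using sym_mat_inner_mulv[OF assms, of v u] by (simp add: inner_commute)
  then show ?thesis
    by (simp add: matrix_vector_right_distrib matrix_vector_mult_scaleR inner_add_left
      inner_add_right power2_eq_square algebra_simps)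
qed

lemma quadratic_nonneg_imp_discriminant:
  fixes a b c :: real
  assumes "0 \<le> c" and nonneg: "\<And>t. 0 \<le> a + 2 * b * t + c * t\<^sup>2"
  shows "b\<^sup>2 \<le> a * c"
proof (cases "c = 0")
  case True
  have "0 \<le> a + 2 * b * (- (a + 1) / (2 * b))" if "b \<noteq> 0"
    using nonneg[of "- (a + 1) / (2 * b)"] True by simp
  then have "b = 0" by (cases "b = 0") (auto simp: field_simps)
  then show ?thesis using True by simp
next
  case False
  with assms have "0 \<le> a + 2 * b * (- b / c) + c * (- b / c)\<^sup>2" by blast
  with False \<open>0 \<le> c\<close> show ?thesis by (simp add: field_simps power2_eq_square)
qed

lemma psd_cauchy_schwarz:
  assumes "X \<in> psd_cone"
  shows "(u \<bullet> (X *v v))\<^sup>2 \<le> u \<bullet> (X *v u) * (v \<bullet> (X *v v))"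
proof (rule quadratic_nonneg_imp_discriminant)
  show "0 \<le> v \<bullet> (X *v v)" using psd_coneD(2)[OF assms] .
  show "0 \<le> u \<bullet> (X *v u) + 2 * (u \<bullet> (X *v v)) * t + v \<bullet> (X *v v) * t\<^sup>2" for t
    using psd_coneD(2)[OF assms, of "u + t *\<^sub>R v"]
    by (simp add: quadratic_form_add_scaleR[OF psd_coneD(1)[OF assms]])
qed

lemma psd_quadratic_form_pos:
  assumes "X \<in> psd_cone" and "X *v y \<noteq> 0"
  shows "0 < y \<bullet> (X *v y)"
proof -
  have "y \<bullet> (X *v y) \<noteq> 0"
  proof
    assume "y \<bullet> (X *v y) = 0"
    then have "((X *v y) \<bullet> (X *v y))\<^sup>2 \<le> 0"
      using psd_cauchy_schwarz[OF assms(1), of "X *v y" y] by simp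
    with assms(2) show False by simp
  qed
  with psd_coneD(2)[OF assms(1), of y] show ?thesis by simp
qed

lemma closed_psd_cone: "closed (psd_cone :: (real^'n^'n) set)"
proof -
  have eq: "psd_cone = {X::real^'n^'n. transpose X - X = 0} \<inter> (\<Inter>x. {X. 0 \<le> x \<bullet> (X *v x)})"
    by (auto simp: psd_cone_def sym_mat_def)
  have "closed {X::real^'n^'n. transpose X - X = 0}"
    by (rule closed_subspace) (auto simp: subspace_def vec_eq_iff transpose_def algebra_simps)
  moreover have "closed {X::real^'n^'n. 0 \<le> x \<bullet> (X *v x)}" for x
    using linear_quadratic_form[of x]
    by (intro closed_Collect_le continuous_on_const linear_continuous_on)
      (simp add: linear_conv_bounded_linear)
  ultimately show ?thesis unfolding eq by (intro closed_Int closed_INT) auto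
qed

text \<open>If \<open>y \<bullet> (X *v y) = 0\<close> then \<open>inverse 0 = 0\<close> gives \<open>deflate X y = X\<close>, so positive
  semidefiniteness is preserved without any hypothesis on \<open>y\<close>.\<close>

definition deflate :: "real^'n^'n \<Rightarrow> real^'n \<Rightarrow> real^'n^'n" where
  "deflate X y = X - inverse (y \<bullet> (X *v y)) *\<^sub>R outer (X *v y) (X *v y)"

lemma deflate_mulv:
  "deflate X y *v z = X *v z - (inverse (y \<bullet> (X *v y)) * ((X *v y) \<bullet> z)) *\<^sub>R (X *v y)"
  by (simp add: deflate_def matrix_vector_mult_diff_rdistrib outer_mulv
      flip: scaleR_matrix_vector_assoc)

lemma deflate_decompose:
  "X = deflate X y + inverse (y \<bullet> (X *v y)) *\<^sub>R outer (X *v y) (X *v y)"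
  by (simp add: deflate_def)

lemma deflate_in_psd_cone:
  assumes "X \<in> psd_cone"
  shows "deflate X y \<in> psd_cone"
proof -
  have "transpose (deflate X y) = deflate X y"
    using psd_coneD(1)[OF assms]
    by (simp add: deflate_def sym_mat_def transpose_diff transpose_scalar transpose_outer)
  moreover have "0 \<le> z \<bullet> (deflate X y *v z)" for z
  proof -
    have "inverse (y \<bullet> (X *v y)) * (z \<bullet> (X *v y))\<^sup>2 \<le> z \<bullet> (X *v z)"
    proof (cases "y \<bullet> (X *v y) = 0")
      case True
      then show ?thesis using psd_coneD(2)[OF assms] by simp
    next
      case False
      have "inverse (y \<bullet> (X *v y)) * (z \<bullet> (X *v y))\<^sup>2
          \<le> inverse (y \<bullet> (X *v y)) * (y \<bullet> (X *v y) * (z \<bullet> (X *v z)))"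
        using psd_cauchy_schwarz[OF assms, of z y] psd_coneD(2)[OF assms, of y]
        by (intro mult_left_mono) (auto simp: mult.commute)
      with False show ?thesis by (simp add: mult.assoc[symmetric])
    qed
    then show ?thesis
      by (simp add: deflate_mulv inner_diff_right power2_eq_square inner_commute mult_ac)
  qed
  ultimately show ?thesis by (simp add: psd_cone_def sym_mat_def)
qed

lemma subspace_range_mulv: "subspace (range (\<lambda>x. (A::real^'n^'m) *v x))"
  using linear_subspace_image[OF matrix_vector_mul_linear[of A] subspace_UNIV] by simp

lemma rank_deflate_less:
  assumes psd: "X \<in> psd_cone" and "X *v y \<noteq> 0"
  shows "rank (deflate X y) < rank X"
proof -
  have q: "0 < y \<bullet> (X *v y)" using psd_quadratic_form_pos[OF assms] .
  have "deflate X y *v z = X *v (z - (inverse (y \<bullet> (X *v y)) * ((X *v y) \<bullet> z)) *\<^sub>R y)" for z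
    by (simp add: deflate_mulv matrix_vector_mult_diff_distrib matrix_vector_mult_scaleR)
  then have subset: "range (\<lambda>z. deflate X y *v z) \<subseteq> range (\<lambda>z. X *v z)" by blast
  have "X *v y \<notin> range (\<lambda>z. deflate X y *v z)"
  proof
    assume "X *v y \<in> range (\<lambda>z. deflate X y *v z)"
    then obtain w where w: "X *v y = deflate X y *v w" by blast
    have "deflate X y *v y = 0" using q by (simp add: deflate_mulv inner_commute)
    then have "y \<bullet> (X *v y) = 0"
      using sym_mat_inner_mulv[OF psd_coneD(1)[OF deflate_in_psd_cone[OF psd, of y]], where u=y and v=w] w
      by simp
    with q show False by simp
  qed
  then have "range (\<lambda>z. deflate X y *v z) \<subset> range (\<lambda>z. X *v z)" using subset by blast
  then show ?thesis
    unfolding rank_dim_range by (simp add: dim_psubset span_eq_iff[THEN iffD2, OF subspace_range_mulv])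
qed

lemma mat_inner_deflate:
  "mat_inner M (deflate X y)
    = mat_inner M X - inverse (y \<bullet> (X *v y)) * ((X *v y) \<bullet> (M *v (X *v y)))"
  by (simp add: deflate_def linear_diff[OF linear_mat_inner] linear_scale[OF linear_mat_inner]
      mat_inner_outer_self)

lemma outer_self_in_S_of: "x \<in> N_of \<M> \<Longrightarrow> outer x x \<in> S_of \<M>"
  by (simp add: S_of_def N_of_def outer_self_in_psd_cone mat_inner_outer_self)

lemma deflate_in_S_of:
  assumes "X \<in> S_of \<M>" and "X *v y \<in> N_of \<M>"
  shows "deflate X y \<in> S_of \<M>"
  using assms by (simp add: S_of_def N_of_def mat_inner_deflate deflate_in_psd_cone)

lemma closed_S_of: "closed (S_of \<M>)"
proof -
  have eq: "S_of \<M> = psd_cone \<inter> (\<Inter>M\<in>\<M>. {X. 0 \<le> mat_inner M X})"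
    by (auto simp: S_of_def)
  have "closed {X::real^'n^'n. 0 \<le> mat_inner M X}" for M
    using linear_mat_inner[of M]
    by (intro closed_Collect_le continuous_on_const linear_continuous_on)
      (simp add: linear_conv_bounded_linear)
  then show ?thesis unfolding eq using closed_psd_cone by (intro closed_Int closed_INT) auto
qed

lemma convex_cone_S_of: "convex_cone (S_of \<M>)"
  unfolding convex_cone_iff
proof (intro conjI ballI allI impI)
  show "0 \<in> S_of \<M>"
    using outer_self_in_S_of[of 0] by (simp add: N_of_def outer_zero)
  show "X + Y \<in> S_of \<M>" if "X \<in> S_of \<M>" "Y \<in> S_of \<M>" for X Y
    using that
    by (simp add: S_of_def psd_cone_def sym_mat_def transpose_add
        linear_add[OF linear_quadratic_form] linear_add[OF linear_mat_inner])
  show "c *\<^sub>R X \<in> S_of \<M>" if "X \<in> S_of \<M>" "0 \<le> c" for X c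
    using that
    by (simp add: S_of_def psd_cone_def sym_mat_def transpose_scalar
        linear_scale[OF linear_quadratic_form] linear_scale[OF linear_mat_inner])
qed

lemma convex_cone_convex_hull_rank_one:
  assumes "convex_cone S"
  shows "convex_cone (convex hull (S \<inter> range (\<lambda>x. outer x x)))"
proof -
  have "cone (S \<inter> range (\<lambda>x. outer x x))"
    unfolding cone_def
  proof (intro ballI allI impI)
    fix A and c :: real assume "A \<in> S \<inter> range (\<lambda>x. outer x x)" "0 \<le> c"
    then obtain x where "A = outer x x" "A \<in> S" by blast
    moreover note convex_cone_scaleR[OF assms \<open>0 \<le> c\<close> \<open>A \<in> S\<close>]
    ultimately show "c *\<^sub>R A \<in> S \<inter> range (\<lambda>x. outer x x)"
      using scaleR_outer_self[OF \<open>0 \<le> c\<close>] by auto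
  qed
  then have "convex (convex hull (S \<inter> range (\<lambda>x. outer x x)))"
    and "cone (convex hull (S \<inter> range (\<lambda>x. outer x x)))"
    by (simp_all add: cone_convex_hull)
  moreover have "0 \<in> convex hull (S \<inter> range (\<lambda>x. outer x x))"
    using convex_cone_iff[of S] assms outer_zero by (intro hull_inc) auto
  ultimately show ?thesis unfolding convex_cone_iff using convex_cone by blast
qed

lemma S_of_subset_convex_hull_rank_one:
  assumes meets: "\<forall>X \<in> S_of \<M>. 2 \<le> rank X \<longrightarrow> range (\<lambda>x. X *v x) \<inter> N_of \<M> \<noteq> {0}"
    and "X \<in> S_of \<M>"
  shows "X \<in> convex hull (S_of \<M> \<inter> range (\<lambda>x. outer x x))"
  using assms(2)
proof (induction "rank X" arbitrary: X rule: less_induct)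
  case less
  let ?H = "convex hull (S_of \<M> \<inter> range (\<lambda>x. outer x x))"
  have psd: "X \<in> psd_cone" using less.prems by (simp add: S_of_def)
  consider "rank X = 0" | "rank X = 1" | "2 \<le> rank X" by linarith
  then show ?case
  proof cases
    case 1
    then show ?thesis using less.prems outer_zero by (intro hull_inc) (auto simp: rank_eq_0)
  next
    case 2
    then obtain y where y: "X *v y \<noteq> 0"
      by (metis matrix_eq matrix_vector_mult_0 rank_eq_0 zero_neq_one)
    with 2 have "deflate X y = 0"
      using rank_deflate_less[OF psd] by (simp add: rank_eq_0 flip: One_nat_def)
    then have "X = inverse (y \<bullet> (X *v y)) *\<^sub>R outer (X *v y) (X *v y)"
      using deflate_decompose[of X y] by (simp only: add_0_left)
    also have "\<dots> = outer (sqrt (inverse (y \<bullet> (X *v y))) *\<^sub>R (X *v y))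
        (sqrt (inverse (y \<bullet> (X *v y))) *\<^sub>R (X *v y))"
      using psd_quadratic_form_pos[OF psd y] by (intro scaleR_outer_self) simp
    finally show ?thesis using less.prems by (intro hull_inc) blast
  next
    case 3
    with meets less.prems have "range (\<lambda>x. X *v x) \<inter> N_of \<M> \<noteq> {0}" by blast
    moreover have "0 \<in> range (\<lambda>x. X *v x) \<inter> N_of \<M>"
      by (auto simp: N_of_def intro: range_eqI[of _ _ 0])
    ultimately obtain y where y: "X *v y \<noteq> 0" "X *v y \<in> N_of \<M>" by blast
    have cone: "convex_cone ?H" by (rule convex_cone_convex_hull_rank_one[OF convex_cone_S_of])
    have "deflate X y \<in> ?H"
      using less.hyps rank_deflate_less[OF psd y(1)] deflate_in_S_of[OF less.prems y(2)] by blast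
    moreover have "inverse (y \<bullet> (X *v y)) *\<^sub>R outer (X *v y) (X *v y) \<in> ?H"
      using outer_self_in_S_of[OF y(2)] psd_quadratic_form_pos[OF psd y(1)]
      by (intro convex_cone_scaleR[OF cone]) (auto intro: hull_inc)
    ultimately have "deflate X y + inverse (y \<bullet> (X *v y)) *\<^sub>R outer (X *v y) (X *v y) \<in> ?H"
      by (rule convex_cone_add[OF cone])
    then show ?thesis by (simp only: deflate_decompose[symmetric])
  qed
qed

lemma ROG_S_of_if_range_meets_N_of:
  assumes "\<forall>X \<in> S_of \<M>. 2 \<le> rank X \<longrightarrow> range (\<lambda>x. X *v x) \<inter> N_of \<M> \<noteq> {0}"
  shows "ROG (S_of \<M>)"
  unfolding ROG_def
proof (intro conjI)
  show "S_of \<M> = convex hull (S_of \<M> \<inter> range (\<lambda>x. outer x x))"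
  proof
    show "S_of \<M> \<subseteq> convex hull (S_of \<M> \<inter> range (\<lambda>x. outer x x))"
      using S_of_subset_convex_hull_rank_one[OF assms] by blast
    show "convex hull (S_of \<M> \<inter> range (\<lambda>x. outer x x)) \<subseteq> S_of \<M>"
      using convex_cone_S_of by (intro hull_minimal) (auto simp: convex_cone_def)
  qed
  show "S_of \<M> \<subseteq> psd_cone" by (auto simp: S_of_def)
qed (simp_all add: closed_S_of convex_cone_S_of)

lemma subspace_meets_hyperplane:
  fixes a :: "'a::euclidean_space"
  assumes "subspace V" and "2 \<le> dim V"
  shows "\<exists>v\<in>V. v \<noteq> 0 \<and> a \<bullet> v = 0"
proof (rule ccontr)
  assume "\<not> ?thesis"
  then have "inj_on (inner a) (span V)"
    using \<open>subspace V\<close> unfolding span_eq_iff[THEN iffD2, OF \<open>subspace V\<close>]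
    by (intro inj_onI) (metis inner_diff_right subspace_diff right_minus_eq)
  then have "dim (inner a ` V) = dim V"
    by (intro eucl.dim_image_eq) (simp_all add: linearI inner_add_right)
  moreover have "dim (inner a ` V) \<le> 1"
    using eucl.dim_subset_UNIV[of "inner a ` V"] by simp
  ultimately show False using \<open>2 \<le> dim V\<close> by simp
qed

lemma hyperplane_subset_N_of_Sym_outer:
  "a \<bullet> x = 0 \<Longrightarrow> x \<in> N_of {Sym (outer a b) | b. b \<in> \<B>}"
  by (auto simp: N_of_def quadratic_form_Sym_outer)

theorem theorem3p4:
  fixes a :: "real^'n" and \<B> :: "(real^'n) set" and \<M> :: "(real^'n^'n) set"
  assumes "\<M> = {Sym (outer a b) | b. b \<in> \<B>}"
  shows "(\<forall>X \<in> psd_cone. rank X \<ge> 2 \<longrightarrow> range (\<lambda>x. X *v x) \<inter> N_of \<M> \<noteq> {0})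
         \<and> ROG (S_of \<M>)"
proof -
  have meets: "range (\<lambda>x. X *v x) \<inter> N_of \<M> \<noteq> {0}" if "rank X \<ge> 2" for X :: "real^'n^'n"
  proof -
    have "\<exists>v \<in> range (\<lambda>x. X *v x). v \<noteq> 0 \<and> a \<bullet> v = 0"
      using that by (intro subspace_meets_hyperplane subspace_range_mulv) (simp add: rank_dim_range)
    then obtain v where "v \<in> range (\<lambda>x. X *v x)" "v \<noteq> 0" "a \<bullet> v = 0" by blast
    then show ?thesis using hyperplane_subset_N_of_Sym_outer assms by blast
  qed
  then have "ROG (S_of \<M>)" by (intro ROG_S_of_if_range_meets_N_of) blast
  with meets show ?thesis by blast
qed

end
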